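(* Let $\gamma_0:[0,1]\to\mathbb{R}^3$ be a regular horizontal curve, and let $\gamma:[0,\hat T)\times[0,1]\to\mathbb{R}^3$ be a sufficiently smooth family with $\gamma(0,\cdot)=\gamma_0$, $|\gamma_u(t,u)|_g\neq0$ for all $(t,u)$, and $\gamma_t(t,u)=q(t,u)T(t,u)$ for some sufficiently smooth $q:[0,\hat T)\times[0,1]\to\mathbb{R}$. Then $\gamma(t,\cdot)$ is horizontal for every $t\in[0,\hat T)$.
   Context: Write $\gamma=(\gamma^1,\gamma^2,\gamma^3)^t$. A curve is horizontal if $\gamma^3_u=-\tfrac12\gamma^2\gamma^1_u+\tfrac12\gamma^1\gamma^2_u$ on $[0,1]$; $|\gamma_u|_g=\sqrt{(\gamma^1_u)^2+(\gamma^2_u)^2}$; regular means $|\gamma_u|_g\ne0$. $T=\frac1{|\gamma_u|_g}\big(\gamma^1_u,\ \gamma^2_u,\ -\tfrac12\gamma^2\gamma^1_u+\tfrac12\gamma^1\gamma^2_u\big)^t$. *)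

theory Defs
  imports "HOL-Analysis.Analysis"
begin

definition gnorm :: "real^3 \<Rightarrow> real" where
  "gnorm v = sqrt ((v $ 1)\<^sup>2 + (v $ 2)\<^sup>2)"

definition cderiv :: "(real \<Rightarrow> real^3) \<Rightarrow> real \<Rightarrow> real^3" where
  "cderiv c u = vector_derivative c (at u within {0..1})"

definition horizontal :: "(real \<Rightarrow> real^3) \<Rightarrow> bool" where
  "horizontal c \<longleftrightarrow> (\<forall>u\<in>{0..1::real}. c differentiable (at u within {0..1}) \<and>
      cderiv c u $ 3 = - (1/2) * (c u $ 2) * (cderiv c u $ 1) + (1/2) * (c u $ 1) * (cderiv c u $ 2))"

definition regular :: "(real \<Rightarrow> real^3) \<Rightarrow> bool" where
  "regular c \<longleftrightarrow> (\<forall>u\<in>{0..1::real}. c differentiable (at u within {0..1}) \<and> gnorm (cderiv c u) \<noteq> 0)"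

definition pt :: "(real \<times> real \<Rightarrow> 'a::real_normed_vector) \<Rightarrow> real \<times> real \<Rightarrow> 'a" where
  "pt f x = vector_derivative (\<lambda>s. f (s, snd x)) (at (fst x))"

definition pu :: "(real \<times> real \<Rightarrow> 'a::real_normed_vector) \<Rightarrow> real \<times> real \<Rightarrow> 'a" where
  "pu f x = vector_derivative (\<lambda>v. f (fst x, v)) (at (snd x))"

definition has_partials_on :: "(real \<times> real \<Rightarrow> 'a::real_normed_vector) \<Rightarrow> (real \<times> real) set \<Rightarrow> bool" where
  "has_partials_on f U \<longleftrightarrow> (\<forall>x\<in>U. (\<lambda>s. f (s, snd x)) differentiable (at (fst x)) \<and>
                                   (\<lambda>v. f (fst x, v)) differentiable (at (snd x)))"

definition C1_on :: "(real \<times> real) set \<Rightarrow> (real \<times> real \<Rightarrow> 'a::real_normed_vector) \<Rightarrow> bool" where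
  "C1_on U f \<longleftrightarrow> continuous_on U f \<and> has_partials_on f U \<and>
     continuous_on U (pt f) \<and> continuous_on U (pu f)"

definition C2_on :: "(real \<times> real) set \<Rightarrow> (real \<times> real \<Rightarrow> 'a::real_normed_vector) \<Rightarrow> bool" where
  "C2_on U f \<longleftrightarrow> C1_on U f \<and> C1_on U (pt f) \<and> C1_on U (pu f)"

definition Tvec :: "(real \<times> real \<Rightarrow> real^3) \<Rightarrow> real \<times> real \<Rightarrow> real^3" where
  "Tvec g x = (1 / gnorm (pu g x)) *\<^sub>R
     vector [pu g x $ 1, pu g x $ 2,
             - (1/2) * (g x $ 2) * (pu g x $ 1) + (1/2) * (g x $ 1) * (pu g x $ 2)]"

end

(* The horizontality defect of gamma(t, .) is theta(gamma_u), where theta = dz + (y dx - x dy)/2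
   is the contact form. Differentiating theta(gamma_u) in t and theta(gamma_t) in u produces the
   same second-order term theta(gamma_tu), because mixed partials commute, and the two derivatives
   differ by gamma_t^2 gamma_u^1 - gamma_t^1 gamma_u^2. Since gamma_t = q T is horizontal,
   theta(gamma_t) vanishes identically; since T is parallel to (gamma_u^1, gamma_u^2), so does the
   difference. Hence theta(gamma_u) is constant in t, and it is zero at t = 0 because gamma_0 is
   horizontal. *)

theory Submission
  imports Defs
begin

lemma has_real_derivative_vec_nth:
  fixes f :: "real \<Rightarrow> real^'n"
  assumes "(f has_vector_derivative f') F"
  shows "((\<lambda>x. f x $ i) has_real_derivative f' $ i) F"
  using bounded_linear.has_vector_derivative[OF bounded_linear_vec_nth assms]
  by (simp add: has_real_derivative_iff_has_vector_derivative)

lemma has_vector_derivative_pt: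
  assumes "has_partials_on f U" "(t, u) \<in> U"
  shows "((\<lambda>s. f (s, u)) has_vector_derivative pt f (t, u)) (at t)"
  using assms unfolding has_partials_on_def pt_def
  by (metis fst_conv snd_conv vector_derivative_works)

lemma has_vector_derivative_pu:
  assumes "has_partials_on f U" "(t, u) \<in> U"
  shows "((\<lambda>v. f (t, v)) has_vector_derivative pu f (t, u)) (at u)"
  using assms unfolding has_partials_on_def pu_def
  by (metis fst_conv snd_conv vector_derivative_works)

lemma continuous_on_slice:
  assumes "continuous_on U f" "{t} \<times> S \<subseteq> U"
  shows "continuous_on S (\<lambda>v. f (t, v))"
  by (rule continuous_on_compose2[OF assms(1) continuous_on_Pair[OF continuous_on_const continuous_on_id]])
     (use assms(2) in auto)

lemma strip_constant_in_t:
  fixes f :: "real \<times> real \<Rightarrow> real"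
  assumes cont: "continuous_on ({0..<T} \<times> {0..1}) f"
    and deriv: "\<And>t u. t \<in> {0..<T} \<Longrightarrow> u \<in> {0<..<1} \<Longrightarrow> ((\<lambda>s. f (s, u)) has_real_derivative 0) (at t)"
    and t: "t \<in> {0..<T}" and u: "u \<in> {0..1}"
  shows "f (t, u) = f (0, u)"
proof -
  have "continuous_on (closure {0<..<1}) (\<lambda>v. f (t, v) - f (0, v))"
    using t by (auto intro!: continuous_intros continuous_on_slice[OF cont])
  then have "f (t, u) - f (0, u) = 0"
  proof (rule continuous_constant_on_closure)
    fix v :: real
    assume v: "v \<in> {0<..<1}"
    obtain c where "\<forall>s\<in>{0..<T}. f (s, v) = c"
      using has_field_derivative_zero_constant[of "{0..<T}" "\<lambda>s. f (s, v)"] deriv[OF _ v]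
        has_field_derivative_at_within by blast
    then show "f (t, v) - f (0, v) = 0"
      using t by auto
  qed (use u in simp)
  then show ?thesis
    by simp
qed

lemma pt_eq_integral_pt_pu:
  fixes g :: "real \<times> real \<Rightarrow> 'a::banach"
  assumes S: "open S" "convex S" and SU: "S \<times> {a..b} \<subseteq> U"
    and g: "has_partials_on g U" "continuous_on U (pu g)"
    and pu_g: "has_partials_on (pu g) U" "continuous_on U (pt (pu g))"
    and t: "t \<in> S" and v: "v \<in> {a..b}"
  shows "pt g (t, v) = pt g (t, a) + integral {a..v} (\<lambda>w. pt (pu g) (t, w))"
proof -
  have av: "{a..v} \<subseteq> {a..b}" using v by auto
  have ftc: "g (s, v) = g (s, a) + integral {a..v} (\<lambda>w. pu g (s, w))" if "s \<in> S" for s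
  proof -
    have "((\<lambda>w. g (s, w)) has_vector_derivative pu g (s, w)) (at w within {a..v})"
      if "w \<in> {a..v}" for w
      using \<open>s \<in> S\<close> that SU av
      by (intro has_vector_derivative_at_within[OF has_vector_derivative_pu[OF g(1)]]) auto
    then have "((\<lambda>w. pu g (s, w)) has_integral g (s, v) - g (s, a)) {a..v}"
      using v by (intro fundamental_theorem_of_calculus) auto
    then show ?thesis by (simp add: integral_unique)
  qed
  have cont: "continuous_on (S \<times> {a..v}) (pt (pu g))"
    by (rule continuous_on_subset[OF pu_g(2)]) (use SU av in auto)
  have "((\<lambda>s. integral (cbox a v) (\<lambda>w. pu g (s, w))) has_vector_derivative
         integral (cbox a v) (\<lambda>w. pt (pu g) (t, w))) (at t within S)"
  proof (rule leibniz_rule_vector_derivative[OF _ _ _ t S(2)])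
    show "((\<lambda>s. pu g (s, w)) has_vector_derivative pt (pu g) (s, w)) (at s within S)"
      if "s \<in> S" "w \<in> cbox a v" for s w
      using that SU av by (intro has_vector_derivative_at_within[OF has_vector_derivative_pt[OF pu_g(1)]]) auto
    show "(\<lambda>w. pu g (s, w)) integrable_on cbox a v" if "s \<in> S" for s
      using that SU av by (intro integrable_continuous continuous_on_slice[OF g(2)]) auto
  qed (simp add: case_prod_eta cont)
  then have "((\<lambda>s. integral {a..v} (\<lambda>w. pu g (s, w))) has_vector_derivative
         integral {a..v} (\<lambda>w. pt (pu g) (t, w))) (at t)"
    by (simp add: at_within_open[OF t S(1)])
  moreover have "(t, a) \<in> U"
    using SU t v by auto
  ultimately have "((\<lambda>s. g (s, a) + integral {a..v} (\<lambda>w. pu g (s, w))) has_vector_derivative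
         pt g (t, a) + integral {a..v} (\<lambda>w. pt (pu g) (t, w))) (at t)"
    by (intro has_vector_derivative_add has_vector_derivative_pt[OF g(1)])
  then have "((\<lambda>s. g (s, v)) has_vector_derivative
         pt g (t, a) + integral {a..v} (\<lambda>w. pt (pu g) (t, w))) (at t)"
    by (rule has_vector_derivative_transform_within_open[OF _ S(1) t]) (simp add: ftc)
  then show ?thesis unfolding pt_def by (simp add: vector_derivative_at)
qed

lemma mixed_partials_symmetric:
  fixes g :: "real \<times> real \<Rightarrow> 'a::banach"
  assumes "open U" "(t, u) \<in> U"
    and g: "has_partials_on g U" "continuous_on U (pu g)"
    and pu_g: "has_partials_on (pu g) U" "continuous_on U (pt (pu g))"
  shows "((\<lambda>v. pt g (t, v)) has_vector_derivative pt (pu g) (t, u)) (at u)"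
proof -
  obtain A B where AB: "open A" "open B" "(t, u) \<in> A \<times> B" "A \<times> B \<subseteq> U"
    using open_prod_elim[OF assms(1,2)] by blast
  obtain d where d: "d > 0" "ball t d \<subseteq> A"
    using AB open_contains_ball by blast
  obtain e where e: "e > 0" "cball u e \<subseteq> B"
    using AB open_contains_cball by blast
  define a b where "a = u - e" and "b = u + e"
  have box: "ball t d \<times> {a..b} \<subseteq> U"
    using AB d e by (auto simp: a_def b_def cball_eq_atLeastAtMost)
  have u: "u \<in> {a<..<b}"
    using e by (simp add: a_def b_def)
  have "at u within {a..b} = at u"
    using u by (intro at_within_interior) auto
  moreover have "((\<lambda>v. integral {a..v} (\<lambda>w. pt (pu g) (t, w))) has_vector_derivative pt (pu g) (t, u))
        (at u within {a..b})"
    using box d u by (intro integral_has_vector_derivative continuous_on_slice[OF pu_g(2)]) auto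
  ultimately have "((\<lambda>v. integral {a..v} (\<lambda>w. pt (pu g) (t, w))) has_vector_derivative pt (pu g) (t, u))
        (at u)"
    by simp
  from has_vector_derivative_add[OF has_vector_derivative_const this]
  have F: "((\<lambda>v. pt g (t, a) + integral {a..v} (\<lambda>w. pt (pu g) (t, w)))
        has_vector_derivative pt (pu g) (t, u)) (at u)"
    by simp
  have rep: "pt g (t, v) = pt g (t, a) + integral {a..v} (\<lambda>w. pt (pu g) (t, w))"
    if "v \<in> {a..b}" for v
    using d that by (intro pt_eq_integral_pt_pu[OF _ _ box g pu_g]) auto
  show ?thesis
  proof (rule has_vector_derivative_transform_within_open[OF F open_greaterThanLessThan u])
    fix v :: real
    assume "v \<in> {a<..<b}"
    then show "pt g (t, a) + integral {a..v} (\<lambda>w. pt (pu g) (t, w)) = pt g (t, v)"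
      by (intro rep[symmetric]) auto
  qed
qed

definition contact_form :: "real^3 \<Rightarrow> real^3 \<Rightarrow> real" where
  "contact_form p v = v $ 3 + (p $ 2 * v $ 1 - p $ 1 * v $ 2) / 2"

lemma contact_form_eq_0_iff:
  "contact_form p v = 0 \<longleftrightarrow> v $ 3 = - (1/2) * (p $ 2) * (v $ 1) + (1/2) * (p $ 1) * (v $ 2)"
  by (auto simp: contact_form_def field_simps)

lemma contact_form_scaleR: "contact_form p (c *\<^sub>R v) = c * contact_form p v"
  by (simp add: contact_form_def algebra_simps)

(* Where gnorm (pu g x) = 0, division by zero makes Tvec g x = 0, so no regularity is needed. *)
lemma contact_form_Tvec: "contact_form (g x) (Tvec g x) = 0"
  by (cases "gnorm (pu g x) = 0") (simp_all add: contact_form_def Tvec_def field_simps)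

lemma Tvec_parallel_pu: "Tvec g x $ 1 * pu g x $ 2 = Tvec g x $ 2 * pu g x $ 1"
  by (simp add: Tvec_def)

lemma has_real_derivative_contact_form:
  assumes "(c has_vector_derivative c') (at x within S)" "(v has_vector_derivative v') (at x within S)"
  shows "((\<lambda>s. contact_form (c s) (v s)) has_real_derivative
           contact_form (c x) v' + (c' $ 2 * v x $ 1 - c' $ 1 * v x $ 2) / 2) (at x within S)"
  unfolding contact_form_def
  using has_real_derivative_vec_nth[OF assms(1)] has_real_derivative_vec_nth[OF assms(2)]
  by (auto intro!: derivative_eq_intros simp: field_simps)

lemma horizontal_cong:
  assumes "\<And>u. u \<in> {0..1} \<Longrightarrow> c u = d u"
  shows "horizontal c = horizontal d"
  unfolding horizontal_def
proof (intro ball_cong[OF refl] conj_cong)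
  fix u :: real
  assume u: "u \<in> {0..1}"
  show "c differentiable at u within {0..1} \<longleftrightarrow> d differentiable at u within {0..1}"
    using differentiable_transform_within[OF _ zero_less_one u] assms by metis
  have "\<forall>\<^sub>F x in nhds u. x \<in> {0..1} \<longrightarrow> c x = d x"
    using assms by (simp add: always_eventually)
  then have "cderiv c u = cderiv d u"
    unfolding cderiv_def by (rule vector_derivative_cong_eq[OF _ refl refl u])
  then show "cderiv c u $ 3 = - (1/2) * (c u $ 2) * (cderiv c u $ 1) + (1/2) * (c u $ 1) * (cderiv c u $ 2)
    \<longleftrightarrow> cderiv d u $ 3 = - (1/2) * (d u $ 2) * (cderiv d u $ 1) + (1/2) * (d u $ 1) * (cderiv d u $ 2)"
    using assms[OF u] by simp
qed

lemma horizontal_slice_iff: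
  assumes "has_partials_on g U" "{t} \<times> {0..1} \<subseteq> U"
  shows "horizontal (\<lambda>u. g (t, u)) \<longleftrightarrow> (\<forall>u\<in>{0..1}. contact_form (g (t, u)) (pu g (t, u)) = 0)"
proof -
  have "(\<lambda>u. g (t, u)) differentiable at u within {0..1}"
    and "cderiv (\<lambda>u. g (t, u)) u = pu g (t, u)" if "u \<in> {0..1}" for u
  proof -
    have "(t, u) \<in> U"
      using assms(2) that by auto
    note d = has_vector_derivative_pu[OF assms(1) this]
    show "(\<lambda>u. g (t, u)) differentiable at u within {0..1}"
      by (rule differentiable_at_withinI[OF differentiableI_vector[OF d]])
    show "cderiv (\<lambda>u. g (t, u)) u = pu g (t, u)"
      unfolding cderiv_def using that by (intro vector_derivative_at_within_ivl[OF d]) auto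
  qed
  then show ?thesis
    unfolding horizontal_def contact_form_eq_0_iff by auto
qed

lemma has_real_derivative_contact_form_pu_zero:
  assumes "open U" "C2_on U g" "(t, u) \<in> U"
    and flow_horizontal: "\<forall>\<^sub>F v in nhds u. contact_form (g (t, v)) (pt g (t, v)) = 0"
    and flow_parallel: "pt g (t, u) $ 1 * pu g (t, u) $ 2 = pt g (t, u) $ 2 * pu g (t, u) $ 1"
  shows "((\<lambda>s. contact_form (g (s, u)) (pu g (s, u))) has_real_derivative 0) (at t)"
proof -
  have g: "has_partials_on g U" "continuous_on U (pu g)"
    and pu_g: "has_partials_on (pu g) U" "continuous_on U (pt (pu g))"
    using assms(2) by (auto simp: C2_on_def C1_on_def)
  let ?D = "pu g (t, u)" and ?P = "pt g (t, u)" and ?M = "pt (pu g) (t, u)"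
  have dt: "((\<lambda>s. contact_form (g (s, u)) (pu g (s, u))) has_real_derivative
      contact_form (g (t, u)) ?M + (?P $ 2 * ?D $ 1 - ?P $ 1 * ?D $ 2) / 2) (at t)"
    by (rule has_real_derivative_contact_form[OF has_vector_derivative_pt[OF g(1) assms(3)]
          has_vector_derivative_pt[OF pu_g(1) assms(3)]])
  have "((\<lambda>v. contact_form (g (t, v)) (pt g (t, v))) has_real_derivative
      contact_form (g (t, u)) ?M + (?D $ 2 * ?P $ 1 - ?D $ 1 * ?P $ 2) / 2) (at u)"
    by (rule has_real_derivative_contact_form[OF has_vector_derivative_pu[OF g(1) assms(3)]
          mixed_partials_symmetric[OF assms(1,3) g pu_g]])
  moreover have "((\<lambda>v. contact_form (g (t, v)) (pt g (t, v))) has_real_derivative 0) (at u)"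
    by (rule DERIV_cong_ev[THEN iffD2, OF refl _ refl DERIV_const[of 0]]) (use flow_horizontal in simp)
  ultimately have "contact_form (g (t, u)) ?M + (?D $ 2 * ?P $ 1 - ?D $ 1 * ?P $ 2) / 2 = 0"
    by (rule DERIV_unique)
  with flow_parallel have "contact_form (g (t, u)) ?M + (?P $ 2 * ?D $ 1 - ?P $ 1 * ?D $ 2) / 2 = 0"
    by (simp add: algebra_simps)
  with dt show ?thesis
    by simp
qed

lemma has_real_derivative_contact_form_pu_zero_if_Tvec_flow:
  assumes "open U" "C2_on U g" "(t, u) \<in> U" "open S" "u \<in> S"
    and flow: "\<And>v. v \<in> S \<Longrightarrow> pt g (t, v) = c v *\<^sub>R Tvec g (t, v)"
  shows "((\<lambda>s. contact_form (g (s, u)) (pu g (s, u))) has_real_derivative 0) (at t)"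
proof (rule has_real_derivative_contact_form_pu_zero[OF assms(1-3)])
  show "\<forall>\<^sub>F v in nhds u. contact_form (g (t, v)) (pt g (t, v)) = 0"
    unfolding eventually_nhds using assms(4,5) flow
    by (intro exI[of _ S]) (simp add: contact_form_scaleR contact_form_Tvec)
  show "pt g (t, u) $ 1 * pu g (t, u) $ 2 = pt g (t, u) $ 2 * pu g (t, u) $ 1"
    using flow[OF assms(5)] by (simp add: Tvec_parallel_pu mult.assoc)
qed

theorem lemma2p14:
  fixes \<gamma>0 :: "real \<Rightarrow> real^3" and \<gamma> :: "real \<times> real \<Rightarrow> real^3"
    and q :: "real \<times> real \<Rightarrow> real" and That :: real and U :: "(real \<times> real) set"
  assumes "regular \<gamma>0" and "horizontal \<gamma>0"
    and "open U" and "{0..<That} \<times> {0..1} \<subseteq> U"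
    and "C2_on U \<gamma>" and "C1_on U q"
    and "\<forall>u\<in>{0..1}. \<gamma> (0, u) = \<gamma>0 u"
    and "\<forall>t\<in>{0..<That}. \<forall>u\<in>{0..1}. gnorm (pu \<gamma> (t, u)) \<noteq> 0"
    and "\<forall>t\<in>{0..<That}. \<forall>u\<in>{0..1}. pt \<gamma> (t, u) = q (t, u) *\<^sub>R Tvec \<gamma> (t, u)"
  shows "\<forall>t\<in>{0..<That}. horizontal (\<lambda>u. \<gamma> (t, u))"
proof -
  define defect where "defect x = contact_form (\<gamma> x) (pu \<gamma> x)" for x
  have \<gamma>: "has_partials_on \<gamma> U" "continuous_on U \<gamma>" "continuous_on U (pu \<gamma>)"
    using assms(5) by (auto simp: C2_on_def C1_on_def)
  have slice: "{t} \<times> {0..1} \<subseteq> U" if "t \<in> {0..<That}" for t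
    using assms(4) that by auto
  have stationary: "((\<lambda>s. defect (s, u)) has_real_derivative 0) (at t)"
    if "t \<in> {0..<That}" "u \<in> {0<..<1}" for t u
    unfolding defect_def using that assms(4,9)
    by (intro has_real_derivative_contact_form_pu_zero_if_Tvec_flow[OF assms(3,5),
          where S="{0<..<1}" and c="\<lambda>v. q (t, v)"]) auto
  have cont: "continuous_on ({0..<That} \<times> {0..1}) defect"
    unfolding defect_def contact_form_def using assms(4) \<gamma>(2,3)
    by (intro continuous_intros) (auto intro: continuous_on_subset)
  have initial: "defect (0, u) = 0" if "0 < That" "u \<in> {0..1}" for u
  proof -
    have "horizontal (\<lambda>u. \<gamma> (0, u))"
      using horizontal_cong[of "\<lambda>u. \<gamma> (0, u)" \<gamma>0] assms(2,7) by simp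
    with horizontal_slice_iff[OF \<gamma>(1) slice[of 0]] that show ?thesis
      unfolding defect_def by simp
  qed
  have "defect (t, u) = 0" if "t \<in> {0..<That}" "u \<in> {0..1}" for t u
    using strip_constant_in_t[OF cont stationary that] initial that by simp
  then show ?thesis
    using horizontal_slice_iff[OF \<gamma>(1) slice] unfolding defect_def by simp
qed

end
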